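(* Let $(X,U)$ be a measurable space, $\mu:U\to B_2$ a measure, and $f_n:X\to B_2$ ($n\in\mathbb N$) measurable functions converging decreasingly to $0$, i.e. $\mathrm{supp}\,f_0\supset\mathrm{supp}\,f_1\supset\cdots$ and $\bigcap_n\mathrm{supp}\,f_n=\emptyset$. Then the binary sequence $\int f_n\,d\mu=\mu(\mathrm{supp}\,f_n)$ converges to $0$.
   Context: $B_2=\{0,1\}$. A measurable space $(X,U)$: $U\subset2^X$ non-empty, closed under symmetric difference and intersection. $f:X\to B_2$ is measurable if $\mathrm{supp}\,f=\{x:f(x)=1\}\in U$, and $\int f\,d\mu=\mu(\mathrm{supp}\,f)$. $\mu$ is a measure if for every sequence of pairwise disjoint sets of $U$ whose union is in $U$, only finitely many have $\mu$-value 1 and $\mu$ of the union is their number modulo 2. A binary sequence converges to $0$ if it is eventually equal to $0$. *)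

theory Defs
  imports Main
begin

text \<open>B_2 = {0,1} is modelled by bool (False = 0, True = 1).\<close>

definition bin_measurable_space :: "'a set \<Rightarrow> 'a set set \<Rightarrow> bool" where
  "bin_measurable_space X U \<longleftrightarrow> U \<subseteq> Pow X \<and> U \<noteq> {} \<and>
     (\<forall>A\<in>U. \<forall>B\<in>U. (A - B) \<union> (B - A) \<in> U \<and> A \<inter> B \<in> U)"

definition bin_measure :: "'a set set \<Rightarrow> ('a set \<Rightarrow> bool) \<Rightarrow> bool" where
  "bin_measure U \<mu> \<longleftrightarrow>
     (\<forall>A :: nat \<Rightarrow> 'a set. range A \<subseteq> U \<longrightarrow> (\<forall>i j. i \<noteq> j \<longrightarrow> A i \<inter> A j = {}) \<longrightarrow> (\<Union>n. A n) \<in> U \<longrightarrow>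
        finite {n. \<mu> (A n)} \<and> \<mu> (\<Union>n. A n) = odd (card {n. \<mu> (A n)}))"

definition supp :: "'a set \<Rightarrow> ('a \<Rightarrow> bool) \<Rightarrow> 'a set" where
  "supp X f = {x \<in> X. f x}"

definition bin_measurable_fun :: "'a set \<Rightarrow> 'a set set \<Rightarrow> ('a \<Rightarrow> bool) \<Rightarrow> bool" where
  "bin_measurable_fun X U f \<longleftrightarrow> supp X f \<in> U"

definition bin_integral :: "'a set \<Rightarrow> ('a set \<Rightarrow> bool) \<Rightarrow> ('a \<Rightarrow> bool) \<Rightarrow> bool" where
  "bin_integral X \<mu> f = \<mu> (supp X f)"

text \<open>A binary sequence converges to 0 iff it is eventually 0.\<close>
definition bin_converges_to_zero :: "(nat \<Rightarrow> bool) \<Rightarrow> bool" where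
  "bin_converges_to_zero s \<longleftrightarrow> (\<exists>N. \<forall>n\<ge>N. \<not> s n)"

end

theory Submission
  imports Defs "HOL-Library.Disjoint_Sets"
begin

text \<open>Cut the decreasing supports \<open>S n\<close> into the disjoint shells \<open>S n - S (Suc n)\<close>. Since
  \<open>\<Inter>n. S n = {}\<close>, each \<open>S m\<close> is the disjoint union of the shells with index \<open>\<ge> m\<close>, so
  \<open>\<mu> (S m)\<close> is the parity of the number of shells of measure 1 beyond \<open>m\<close>. Applied to
  \<open>S 0\<close>, additivity says that only finitely many shells have measure 1; beyond the last
  one the parity is 0.\<close>

lemma bin_measureD:
  fixes A :: "nat \<Rightarrow> 'a set"
  assumes "bin_measure U \<mu>" and "range A \<subseteq> U"
    and "disjoint_family A" and "(\<Union>n. A n) \<in> U"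
  shows "finite {n. \<mu> (A n)}" and "\<mu> (\<Union>n. A n) = odd (card {n. \<mu> (A n)})"
  using assms unfolding bin_measure_def disjoint_family_on_def by blast+

lemma bin_measurable_space_Diff:
  assumes "bin_measurable_space X U" and "A \<in> U" and "B \<in> U"
  shows "A - B \<in> U"
proof -
  have closed: "\<And>A B. A \<in> U \<Longrightarrow> B \<in> U \<Longrightarrow> (A - B) \<union> (B - A) \<in> U \<and> A \<inter> B \<in> U"
    using assms(1) unfolding bin_measurable_space_def by blast
  have "(A - A \<inter> B) \<union> (A \<inter> B - A) \<in> U"
    using closed assms(2,3) by blast
  moreover have "(A - A \<inter> B) \<union> (A \<inter> B - A) = A - B"
    by blast
  ultimately show ?thesis
    by simp
qed

lemma antimono_disjoint_family_Diff_Suc: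
  fixes S :: "nat \<Rightarrow> 'a set"
  assumes "antimono S"
  shows "disjoint_family (\<lambda>n. S n - S (Suc n))"
  unfolding disjoint_family_on_def
proof (intro ballI impI)
  have later: "S j \<subseteq> S (Suc i)" if "i < j" for i j
    using antimonoD[OF assms] that by simp
  fix i j :: nat assume "i \<noteq> j"
  then consider "i < j" | "j < i"
    by linarith
  then show "(S i - S (Suc i)) \<inter> (S j - S (Suc j)) = {}"
    by cases (use later[of i j] later[of j i] in blast)+
qed

lemma antimono_UN_Diff_Suc:
  fixes S :: "nat \<Rightarrow> 'a set"
  assumes "antimono S" and "(\<Inter>n. S n) = {}"
  shows "(\<Union>n. S n - S (Suc n)) = S 0"
proof
  show "(\<Union>n. S n - S (Suc n)) \<subseteq> S 0"
  proof (rule UN_least)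
    fix n
    have "S n \<subseteq> S 0"
      using antimonoD[OF assms(1)] by simp
    then show "S n - S (Suc n) \<subseteq> S 0"
      by blast
  qed
next
  show "S 0 \<subseteq> (\<Union>n. S n - S (Suc n))"
  proof
    fix x assume "x \<in> S 0"
    have "x \<notin> (\<Inter>n. S n)"
      using assms(2) by simp
    then obtain l where "x \<notin> S l"
      by blast
    then obtain n where "x \<in> S n" and "x \<notin> S (Suc n)"
      using \<open>x \<in> S 0\<close>
    proof (induction l)
      case 0
      then show ?case by simp
    next
      case (Suc l)
      then show ?case by blast
    qed
    then show "x \<in> (\<Union>n. S n - S (Suc n))"
      by blast
  qed
qed

lemma bin_measure_antimono_shells:
  fixes S :: "nat \<Rightarrow> 'a set"
  assumes "bin_measurable_space X U" and "bin_measure U \<mu>"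
    and "range S \<subseteq> U" and "antimono S" and "(\<Inter>n. S n) = {}"
  shows "finite {n. \<mu> (S n - S (Suc n))}"
    and "\<mu> (S 0) = odd (card {n. \<mu> (S n - S (Suc n))})"
proof -
  have shells_U: "range (\<lambda>n. S n - S (Suc n)) \<subseteq> U"
    using bin_measurable_space_Diff[OF assms(1)] assms(3) by blast
  have shells_union: "(\<Union>n. S n - S (Suc n)) = S 0"
    using antimono_UN_Diff_Suc[OF assms(4,5)] .
  then have shells_union_U: "(\<Union>n. S n - S (Suc n)) \<in> U"
    using assms(3) by auto
  note shells = bin_measureD[OF assms(2) shells_U antimono_disjoint_family_Diff_Suc[OF assms(4)]
      shells_union_U]
  show "finite {n. \<mu> (S n - S (Suc n))}"
    using shells(1) .
  show "\<mu> (S 0) = odd (card {n. \<mu> (S n - S (Suc n))})"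
    using shells(2) by (simp only: shells_union)
qed

lemma bin_measure_antimono_eventually_zero:
  fixes S :: "nat \<Rightarrow> 'a set"
  assumes "bin_measurable_space X U" and "bin_measure U \<mu>"
    and "range S \<subseteq> U" and "antimono S" and "(\<Inter>n. S n) = {}"
  shows "\<exists>N. \<forall>m\<ge>N. \<not> \<mu> (S m)"
proof -
  obtain N where N: "\<And>n. \<mu> (S n - S (Suc n)) \<Longrightarrow> n < N"
    using bin_measure_antimono_shells(1)[OF assms] by (auto simp: finite_nat_set_iff_bounded)
  have "\<not> \<mu> (S m)" if "m \<ge> N" for m
  proof -
    let ?T = "\<lambda>n. S (n + m)"
    have "range ?T \<subseteq> U"
      using assms(3) by auto
    moreover have "antimono ?T"
      using assms(4) by (simp add: antimono_iff_le_Suc antimonoD)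
    moreover have "(\<Inter>n. ?T n) \<subseteq> (\<Inter>n. S n)"
    proof (rule INF_mono)
      fix n
      show "\<exists>k\<in>UNIV. ?T k \<subseteq> S n"
        using antimonoD[OF assms(4), of n "n + m"] by auto
    qed
    then have "(\<Inter>n. ?T n) = {}"
      using assms(5) by (simp only: subset_empty)
    ultimately have "\<mu> (?T 0) = odd (card {n. \<mu> (?T n - ?T (Suc n))})"
      by (rule bin_measure_antimono_shells(2)[OF assms(1,2)])
    moreover have "\<not> \<mu> (?T n - ?T (Suc n))" for n
      using N[of "n + m"] that by auto
    ultimately show ?thesis
      by simp
  qed
  then show ?thesis
    by blast
qed

theorem corollary7p10:
  fixes X :: "'a set" and U :: "'a set set" and \<mu> :: "'a set \<Rightarrow> bool"
    and f :: "nat \<Rightarrow> 'a \<Rightarrow> bool"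
  assumes "bin_measurable_space X U"
    and "bin_measure U \<mu>"
    and "\<And>n. bin_measurable_fun X U (f n)"
    and "\<And>n. supp X (f (Suc n)) \<subseteq> supp X (f n)"
    and "(\<Inter>n. supp X (f n)) = {}"
  shows "bin_converges_to_zero (\<lambda>n. bin_integral X \<mu> (f n))"
proof -
  have "range (\<lambda>n. supp X (f n)) \<subseteq> U"
    using assms(3) by (auto simp: bin_measurable_fun_def)
  moreover have "antimono (\<lambda>n. supp X (f n))"
    using assms(4) by (simp add: antimono_iff_le_Suc)
  ultimately show ?thesis
    using bin_measure_antimono_eventually_zero[OF assms(1,2) _ _ assms(5)]
    unfolding bin_converges_to_zero_def bin_integral_def by blast
qed

end
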